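(* Let $\vec E$ be as in the context, fix $b\in\Lambda^*$, and for $J_\Lambda,J'_\Lambda\in\mathbb{R}^{\Lambda^*}$ consider the curve $J_\Lambda(s)=e^{-s}J_\Lambda+\sqrt{1-e^{-2s}}J'_\Lambda$, $s\ge0$. For almost all $(J_\Lambda,J'_\Lambda)$ with respect to the product of standard Gaussian measures, the following implication holds for every $t\ge0$: if $F_b(s)>0$ for all $0\le s\le t$, then $\sigma_b(s)=\sigma_b(0)$ for all $0\le s\le t$.
   Context: $\Lambda\subset\mathbb{Z}^d$ is a finite box, $\Lambda^*$ its set of nearest-neighbour edges. For spins $\eta$ and $e=\{x,y\}$, $\eta_e=\eta_x\eta_y$; $\mathcal S_\Lambda\subset\{-1,1\}^{\Lambda^*}$ is the set of edge configurations induced by spin configurations on $\Lambda$. $H_{\Lambda,J}(\eta)=-\sum_{e\in\Lambda^*}J_e\eta_e$. $\vec E=(E(\eta,\eta'))_{\eta,\eta'\in\mathcal S_\Lambda}$ is a family of reals with $E(\eta,\eta)=0$ and $E(\eta,\eta'')=E(\eta,\eta')+E(\eta',\eta'')$. Critical set $\mathcal C=\bigcup_{\eta\ne\eta'}\{J_\Lambda:\sum_eJ_e(\eta_e-\eta'_e)=E(\eta,\eta')\}$. For $J_\Lambda\notin\mathcal C$, $\eta\prec\eta'$ iff $E(\eta,\eta')+H_{\Lambda,J}(\eta)-H_{\Lambda,J}(\eta')<0$ (a strict total order); $\sigma(J_\Lambda)$ is the $\prec$-minimal element and $\sigma^{\pm,b}(J_\Lambda)$ the $\prec$-minimal element among $\eta$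 with $\eta_b=\pm1$. The flexibility $F_b(J_\Lambda)=\big|-\sum_{e}J_e(\sigma^{+,b}_e(J_\Lambda)-\sigma^{-,b}_e(J_\Lambda))+E(\sigma^{+,b}(J_\Lambda),\sigma^{-,b}(J_\Lambda))\big|$ on $\mathbb{R}^{\Lambda^*}\setminus\mathcal C$ extends uniquely to a continuous function on $\mathbb{R}^{\Lambda^*}$, still denoted $F_b$. Write $F_b(s)=F_b(J_\Lambda(s))$ and $\sigma(s)=\sigma(J_\Lambda(s))$ (defined when $J_\Lambda(s)\notin\mathcal C$). *)

theory Defs
  imports "HOL-Probability.Probability"
begin

type_synonym 'd site = "int ^ 'd"
type_synonym 'd edge = "'d site set"
type_synonym 'd cfg = "'d edge \<Rightarrow> real"   (* edge configurations / couplings *)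

definition box_Z :: "'d::finite site \<Rightarrow> 'd site \<Rightarrow> 'd site set" where
  "box_Z a c = {x. \<forall>i. a $ i \<le> x $ i \<and> x $ i \<le> c $ i}"

definition nn_edges :: "'d::finite site set \<Rightarrow> 'd edge set" where
  "nn_edges L = {{x, y} | x y. x \<in> L \<and> y \<in> L \<and> (\<Sum>i\<in>UNIV. \<bar>x $ i - y $ i\<bar>) = 1}"

definition edge_spin :: "'d::finite site set \<Rightarrow> ('d site \<Rightarrow> real) \<Rightarrow> 'd cfg" where
  "edge_spin L \<eta> = (\<lambda>e. if e \<in> nn_edges L then (\<Prod>x\<in>e. \<eta> x) else 0)"

definition edge_cfgs :: "'d::finite site set \<Rightarrow> 'd cfg set" where
  "edge_cfgs L = {edge_spin L \<eta> | \<eta>. \<forall>x\<in>L. \<eta> x \<in> {-1, 1}}"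

definition hamiltonian :: "'d::finite site set \<Rightarrow> 'd cfg \<Rightarrow> 'd cfg \<Rightarrow> real" where
  "hamiltonian L J \<eta> = - (\<Sum>e\<in>nn_edges L. J e * \<eta> e)"

definition critical_set :: "'d::finite site set \<Rightarrow> ('d cfg \<Rightarrow> 'd cfg \<Rightarrow> real) \<Rightarrow> 'd cfg set" where
  "critical_set L E = {J. \<exists>\<eta>\<in>edge_cfgs L. \<exists>\<eta>'\<in>edge_cfgs L. \<eta> \<noteq> \<eta>' \<and>
      (\<Sum>e\<in>nn_edges L. J e * (\<eta> e - \<eta>' e)) = E \<eta> \<eta>'}"

definition prec :: "'d::finite site set \<Rightarrow> ('d cfg \<Rightarrow> 'd cfg \<Rightarrow> real) \<Rightarrow> 'd cfg \<Rightarrow> 'd cfg \<Rightarrow> 'd cfg \<Rightarrow> bool" where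
  "prec L E J \<eta> \<eta>' \<longleftrightarrow> E \<eta> \<eta>' + hamiltonian L J \<eta> - hamiltonian L J \<eta>' < 0"

definition prec_min :: "'d::finite site set \<Rightarrow> ('d cfg \<Rightarrow> 'd cfg \<Rightarrow> real) \<Rightarrow> 'd cfg \<Rightarrow> 'd cfg set \<Rightarrow> 'd cfg" where
  "prec_min L E J A = (THE \<eta>. \<eta> \<in> A \<and> (\<forall>\<eta>'\<in>A. \<eta>' \<noteq> \<eta> \<longrightarrow> prec L E J \<eta> \<eta>'))"

definition ground :: "'d::finite site set \<Rightarrow> ('d cfg \<Rightarrow> 'd cfg \<Rightarrow> real) \<Rightarrow> 'd cfg \<Rightarrow> 'd cfg" where
  "ground L E J = prec_min L E J (edge_cfgs L)"

definition ground_pm :: "'d::finite site set \<Rightarrow> ('d cfg \<Rightarrow> 'd cfg \<Rightarrow> real) \<Rightarrow> real \<Rightarrow> 'd edge \<Rightarrow> 'd cfg \<Rightarrow> 'd cfg" where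
  "ground_pm L E s b J = prec_min L E J {\<eta> \<in> edge_cfgs L. \<eta> b = s}"

definition flex_raw :: "'d::finite site set \<Rightarrow> ('d cfg \<Rightarrow> 'd cfg \<Rightarrow> real) \<Rightarrow> 'd edge \<Rightarrow> 'd cfg \<Rightarrow> real" where
  "flex_raw L E b J = (let sp = ground_pm L E 1 b J; sm = ground_pm L E (-1) b J in
     \<bar>- (\<Sum>e\<in>nn_edges L. J e * (sp e - sm e)) + E sp sm\<bar>)"

definition flex :: "'d::finite site set \<Rightarrow> ('d cfg \<Rightarrow> 'd cfg \<Rightarrow> real) \<Rightarrow> 'd edge \<Rightarrow> 'd cfg \<Rightarrow> real" where
  "flex L E b = (THE F. continuous_on UNIV F \<and>
      (\<forall>J. J \<notin> critical_set L E \<longrightarrow> F J = flex_raw L E b J))"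

definition gauss_couplings :: "'d::finite site set \<Rightarrow> 'd cfg measure" where
  "gauss_couplings L = PiM (nn_edges L) (\<lambda>_. density lborel std_normal_density)"

definition curve :: "'d cfg \<Rightarrow> 'd cfg \<Rightarrow> real \<Rightarrow> 'd cfg" where
  "curve J J' s = (\<lambda>e. exp (- s) * J e + sqrt (1 - exp (- 2 * s)) * J' e)"

end

theory Submission
  imports Defs
begin

(* Because E is a cocycle, E \<eta> \<eta>' = E \<eta>0 \<eta>' - E \<eta>0 \<eta> for a fixed configuration \<eta>0, so \<prec> is
   the order of the potential H_J(\<eta>) - E \<eta>0 \<eta>.  Off the critical set this potential is injective,
   and the ground state has \<sigma>_b = 1 exactly when the gap
     min {potential \<eta> | \<eta>_b = 1} - min {potential \<eta> | \<eta>_b = -1}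
   is negative.  The gap is continuous in J and F_b is its absolute value (the critical set, a
   finite union of hyperplanes, has empty interior).  Hence along the curve, where F_b > 0, the gap
   keeps its sign by the intermediate value theorem.  The only probabilistic input is that
   J(0) = J is almost surely non-critical, hyperplanes being Gaussian null sets. *)

lemma finite_box_Z: "finite (box_Z (a :: int ^ 'd::finite) c)"
proof -
  have "box_Z a c \<subseteq> vec_lambda ` (PiE UNIV (\<lambda>i. {a$i..c$i}))"
  proof
    fix x assume "x \<in> box_Z a c"
    then have "(\<lambda>i. x$i) \<in> PiE UNIV (\<lambda>i. {a$i..c$i})" by (auto simp: box_Z_def)
    then show "x \<in> vec_lambda ` (PiE UNIV (\<lambda>i. {a$i..c$i}))"
      by (metis image_eqI vec_lambda_eta)
  qed
  moreover have "finite (PiE UNIV (\<lambda>i. {a$i..c$i}))" by (rule finite_PiE) auto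
  ultimately show ?thesis by (meson finite_imageI finite_subset)
qed

lemma finite_nn_edges: "finite L \<Longrightarrow> finite (nn_edges L)"
  by (rule finite_subset[of _ "Pow L"]) (auto simp: nn_edges_def)

lemma nn_edges_subset: "e \<in> nn_edges L \<Longrightarrow> e \<subseteq> L"
  by (auto simp: nn_edges_def)

lemma prod_in_plus_minus_one: "(\<And>x. x \<in> A \<Longrightarrow> f x \<in> {-1, 1 :: real}) \<Longrightarrow> prod f A \<in> {-1, 1}"
  by (induction A rule: infinite_finite_induct) (auto, metis+)

lemma edge_cfgs_outside_edges: "\<eta> \<in> edge_cfgs L \<Longrightarrow> e \<notin> nn_edges L \<Longrightarrow> \<eta> e = 0"
  by (auto simp: edge_cfgs_def edge_spin_def)

lemma edge_cfgs_on_edges: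
  assumes "\<eta> \<in> edge_cfgs L" "e \<in> nn_edges L"
  shows "\<eta> e \<in> {-1, 1}"
proof -
  obtain s where s: "\<forall>x\<in>L. s x \<in> {-1, 1}" "\<eta> = edge_spin L s"
    using assms(1) by (auto simp: edge_cfgs_def)
  have "prod s e \<in> {-1, 1}"
    using s(1) nn_edges_subset[OF assms(2)] by (intro prod_in_plus_minus_one) blast
  then show ?thesis
    using s(2) assms(2) by (simp add: edge_spin_def)
qed

lemma finite_edge_cfgs:
  assumes "finite L"
  shows "finite (edge_cfgs L)"
proof (rule finite_subset)
  show "edge_cfgs L \<subseteq> {f. \<forall>e. (e \<in> nn_edges L \<longrightarrow> f e \<in> {-1, 1}) \<and> (e \<notin> nn_edges L \<longrightarrow> f e = 0)}"
    using edge_cfgs_on_edges edge_cfgs_outside_edges by blast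
  show "finite {f. \<forall>e. (e \<in> nn_edges L \<longrightarrow> f e \<in> {-1, 1::real}) \<and> (e \<notin> nn_edges L \<longrightarrow> f e = 0)}"
    by (rule finite_set_of_finite_funs) (auto simp: finite_nn_edges assms)
qed

lemma edge_cfgs_neq_on_edge:
  assumes "\<eta> \<in> edge_cfgs L" "\<eta>' \<in> edge_cfgs L" "\<eta> \<noteq> \<eta>'"
  obtains e where "e \<in> nn_edges L" "\<eta> e \<noteq> \<eta>' e"
  using assms edge_cfgs_outside_edges by (metis ext)

lemma edge_cfgs_value_at_edge:
  assumes "b \<in> nn_edges L" "s \<in> {-1, 1}"
  shows "\<exists>\<eta>\<in>edge_cfgs L. \<eta> b = s"
proof -
  obtain x y where b: "b = {x, y}" "(\<Sum>i\<in>UNIV. \<bar>x $ i - y $ i\<bar>) = 1"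
    using assms(1) by (auto simp: nn_edges_def)
  then have "x \<noteq> y"
    by auto
  define \<eta> where "\<eta> = edge_spin L (\<lambda>z. if z = x then s else 1)"
  have "\<eta> \<in> edge_cfgs L"
    unfolding edge_cfgs_def \<eta>_def using assms(2) by (intro CollectI exI[of _ "\<lambda>z. if z = x then s else 1"]) auto
  moreover have "\<eta> b = s"
    using assms(1) b(1) \<open>x \<noteq> y\<close> by (simp add: \<eta>_def edge_spin_def)
  ultimately show ?thesis
    by blast
qed

lemma continuous_on_coordinate [continuous_intros]: "continuous_on S (\<lambda>J :: 'a \<Rightarrow> real. J e)"
  by (rule continuous_on_subset[OF continuous_on_product_coordinates]) auto

lemma continuous_on_Min_image:
  fixes f :: "'b \<Rightarrow> 'a::topological_space \<Rightarrow> real"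
  assumes "finite A" "A \<noteq> {}" "\<And>a. a \<in> A \<Longrightarrow> continuous_on S (f a)"
  shows "continuous_on S (\<lambda>x. Min ((\<lambda>a. f a x) ` A))"
  using assms
proof (induction A rule: finite_ne_induct)
  case (insert a F)
  then have "continuous_on S (\<lambda>x. min (f a x) (Min ((\<lambda>a. f a x) ` F)))"
    by (intro continuous_on_min) auto
  then show ?case
    using insert by simp
qed simp

lemma interior_finite_UN_closed_empty:
  assumes "finite I" "\<And>i. i \<in> I \<Longrightarrow> closed (H i) \<and> interior (H i) = {}"
  shows "interior (\<Union>i\<in>I. H i) = {}"
  using assms
proof (induction I rule: finite_induct)
  case (insert i I)
  then have "interior (H i \<union> (\<Union>j\<in>I. H j)) = interior (H i)"
    by (intro interior_closed_Un_empty_interior) auto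
  then show ?case
    using insert by simp
qed simp

lemma interior_hyperplane_empty:
  fixes c :: "'a \<Rightarrow> real"
  assumes "finite N" "e0 \<in> N" "c e0 \<noteq> 0"
  shows "interior {J. (\<Sum>e\<in>N. J e * c e) = r} = {}" (is "interior ?H = {}")
proof (rule ccontr)
  assume "interior ?H \<noteq> {}"
  then obtain U J where U: "open U" "J \<in> U" "U \<subseteq> ?H"
    by (auto elim: interiorE)
  define p where "p t = (\<lambda>e. J e + t * indicator {e0} e)" for t :: real
  have "continuous_on UNIV p"
    unfolding p_def by (intro continuous_intros)
  then have "open (p -` U)"
    by (rule open_vimage[OF U(1)])
  moreover have "0 \<in> p -` U"
    using U(2) by (simp add: p_def)
  ultimately obtain \<epsilon> where "\<epsilon> > 0" "ball 0 \<epsilon> \<subseteq> p -` U"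
    by (meson open_contains_ball)
  then have "p (\<epsilon> / 2) \<in> ?H"
    using U(3) by (auto simp: subset_eq dist_norm)
  moreover have "(\<Sum>e\<in>N. p t e * c e) = (\<Sum>e\<in>N. J e * c e) + t * c e0" for t
    using assms by (simp add: p_def distrib_right sum.distrib indicator_def mult.assoc flip: sum_distrib_left)
  moreover have "J \<in> ?H"
    using U by blast
  ultimately show False
    using \<open>\<epsilon> > 0\<close> assms(3) by simp
qed

lemma sign_invariant_if_nonvanishing:
  fixes \<phi> :: "real \<Rightarrow> real"
  assumes "a \<le> b" "continuous_on {a..b} \<phi>" "\<And>u. u \<in> {a..b} \<Longrightarrow> \<phi> u \<noteq> 0"
  shows "\<phi> b < 0 \<longleftrightarrow> \<phi> a < 0"
proof (rule ccontr)
  assume "(\<phi> b < 0) \<noteq> (\<phi> a < 0)"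
  then consider "\<phi> a \<le> 0" "0 \<le> \<phi> b" | "\<phi> b \<le> 0" "0 \<le> \<phi> a"
    by linarith
  then obtain u where "a \<le> u" "u \<le> b" "\<phi> u = 0"
    by cases (use IVT'[OF _ _ assms(1,2)] IVT2'[OF _ _ assms(1,2)] in blast)+
  then show False
    using assms(3) by auto
qed

(* Fubini in the coordinate e0: every line parallel to that axis meets the hyperplane in at most
   one point. *)
lemma hyperplane_null_sets_PiM:
  fixes c :: "'a \<Rightarrow> real" and M :: "real measure"
  assumes "finite N" "e0 \<in> N" "c e0 \<noteq> 0"
    and M: "sets M = sets borel" "sigma_finite_measure M" "\<And>y. emeasure M {y} = 0"
  shows "{J \<in> space (PiM N (\<lambda>_. M)). (\<Sum>e\<in>N. J e * c e) = r} \<in> null_sets (PiM N (\<lambda>_. M))"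
    (is "?H \<in> null_sets ?P")
proof -
  interpret product_sigma_finite "\<lambda>_. M"
    unfolding product_sigma_finite_def using M(2) by blast
  have H: "?H \<in> sets ?P"
    using M(1) by measurable
  have N: "N = insert e0 (N - {e0})"
    using assms(2) by blast
  have slice_null: "(\<integral>\<^sup>+ y. indicator ?H (x(e0 := y)) \<partial>M) = 0" for x
  proof -
    define y0 where "y0 = (r - (\<Sum>e\<in>N - {e0}. x e * c e)) / c e0"
    have "(\<Sum>e\<in>N. (x(e0 := y)) e * c e) = y * c e0 + (\<Sum>e\<in>N - {e0}. x e * c e)" for y
      using assms(1,2) by (simp add: sum.remove)
    then have "indicator ?H (x(e0 := y)) \<le> (indicator {y0} y :: ennreal)" for y
      using assms(3) by (auto simp: indicator_def y0_def field_simps)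
    then have "(\<integral>\<^sup>+ y. indicator ?H (x(e0 := y)) \<partial>M) \<le> (\<integral>\<^sup>+ y. indicator {y0} y \<partial>M)"
      by (rule nn_integral_mono)
    also have "\<dots> = 0"
      using M by (simp add: sets_eq_imp_space_eq)
    finally show ?thesis
      by simp
  qed
  have "emeasure ?P ?H = (\<integral>\<^sup>+ J. indicator ?H J \<partial>?P)"
    using H by simp
  also have "\<dots> = (\<integral>\<^sup>+ x. (\<integral>\<^sup>+ y. indicator ?H (x(e0 := y)) \<partial>M) \<partial>PiM (N - {e0}) (\<lambda>_. M))"
    using product_nn_integral_insert[of "N - {e0}" e0 "indicator ?H"] assms(1) H N by simp
  also have "\<dots> = 0"
    by (simp add: slice_null)
  finally show ?thesis
    using H by (simp add: null_sets_def)
qed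

lemma std_normal_singleton_null: "emeasure (density lborel std_normal_density) {y} = 0"
  by (subst emeasure_density) auto

definition distinct_cfg_pairs :: "'d::finite site set \<Rightarrow> ('d cfg \<times> 'd cfg) set" where
  "distinct_cfg_pairs L = {(\<eta>, \<eta>'). \<eta> \<in> edge_cfgs L \<and> \<eta>' \<in> edge_cfgs L \<and> \<eta> \<noteq> \<eta>'}"

definition critical_hyperplane ::
    "'d::finite site set \<Rightarrow> ('d cfg \<Rightarrow> 'd cfg \<Rightarrow> real) \<Rightarrow> 'd cfg \<times> 'd cfg \<Rightarrow> 'd cfg set" where
  "critical_hyperplane L E p = {J. (\<Sum>e\<in>nn_edges L. J e * (fst p e - snd p e)) = E (fst p) (snd p)}"

lemma critical_set_eq_UN: "critical_set L E = (\<Union>p\<in>distinct_cfg_pairs L. critical_hyperplane L E p)"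
  unfolding critical_set_def distinct_cfg_pairs_def critical_hyperplane_def by force

lemma finite_distinct_cfg_pairs: "finite L \<Longrightarrow> finite (distinct_cfg_pairs L)"
  unfolding distinct_cfg_pairs_def
  by (rule finite_subset[of _ "edge_cfgs L \<times> edge_cfgs L"]) (auto simp: finite_edge_cfgs)

lemma distinct_cfg_pairsE:
  assumes "p \<in> distinct_cfg_pairs L"
  obtains e where "e \<in> nn_edges L" "fst p e \<noteq> snd p e"
  using assms by (auto simp: distinct_cfg_pairs_def elim: edge_cfgs_neq_on_edge)

lemma interior_critical_set_empty:
  assumes "finite L"
  shows "interior (critical_set L E) = {}"
  unfolding critical_set_eq_UN
proof (rule interior_finite_UN_closed_empty[OF finite_distinct_cfg_pairs[OF assms]])
  fix p assume "p \<in> distinct_cfg_pairs L"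
  then obtain e where "e \<in> nn_edges L" "fst p e \<noteq> snd p e"
    by (rule distinct_cfg_pairsE)
  then have "interior (critical_hyperplane L E p) = {}"
    unfolding critical_hyperplane_def by (intro interior_hyperplane_empty finite_nn_edges assms) auto
  moreover have "closed (critical_hyperplane L E p)"
    unfolding critical_hyperplane_def by (intro closed_Collect_eq continuous_intros)
  ultimately show "closed (critical_hyperplane L E p) \<and> interior (critical_hyperplane L E p) = {}"
    by blast
qed

lemma critical_set_null:
  assumes "finite L"
  shows "critical_set L E \<inter> space (gauss_couplings L) \<in> null_sets (gauss_couplings L)"
proof -
  have "critical_set L E \<inter> space (gauss_couplings L) =
      (\<Union>p\<in>distinct_cfg_pairs L. critical_hyperplane L E p \<inter> space (gauss_couplings L))"
    unfolding critical_set_eq_UN by blast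
  also have "\<dots> \<in> null_sets (gauss_couplings L)"
  proof (rule null_sets_UN'[OF countable_finite[OF finite_distinct_cfg_pairs[OF assms]]])
    fix p assume "p \<in> distinct_cfg_pairs L"
    then obtain e where "e \<in> nn_edges L" "fst p e \<noteq> snd p e"
      by (rule distinct_cfg_pairsE)
    moreover have "sigma_finite_measure (density lborel std_normal_density)"
      by (rule prob_space_imp_sigma_finite[OF prob_space_normal_density]) simp
    ultimately have "{J \<in> space (gauss_couplings L).
        (\<Sum>e\<in>nn_edges L. J e * (fst p e - snd p e)) = E (fst p) (snd p)} \<in> null_sets (gauss_couplings L)"
      unfolding gauss_couplings_def
      by (intro hyperplane_null_sets_PiM finite_nn_edges assms std_normal_singleton_null) simp_all
    then show "critical_hyperplane L E p \<inter> space (gauss_couplings L) \<in> null_sets (gauss_couplings L)"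
      by (simp add: critical_hyperplane_def Collect_conj_eq Int_commute)
  qed
  finally show ?thesis .
qed

lemma continuous_on_curve: "continuous_on S (curve J J')"
  unfolding curve_def by (intro continuous_intros)

lemma curve_at_0: "curve J J' 0 = J"
  by (simp add: curve_def)

locale ground_state_model =
  fixes L :: "'d::finite site set" and E :: "'d cfg \<Rightarrow> 'd cfg \<Rightarrow> real"
    and b :: "'d edge" and \<eta>0 :: "'d cfg"
  assumes finite_L: "finite L"
    and E_cocycle: "\<forall>\<eta>\<in>edge_cfgs L. \<forall>\<eta>'\<in>edge_cfgs L. \<forall>\<eta>''\<in>edge_cfgs L.
                      E \<eta> \<eta>'' = E \<eta> \<eta>' + E \<eta>' \<eta>''"
    and b_edge: "b \<in> nn_edges L"
    and base_cfg: "\<eta>0 \<in> edge_cfgs L"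
begin

definition energy :: "'d cfg \<Rightarrow> 'd cfg \<Rightarrow> real" where
  "energy J \<eta> = hamiltonian L J \<eta> - E \<eta>0 \<eta>"

lemma energy_diff:
  assumes "\<eta> \<in> edge_cfgs L" "\<eta>' \<in> edge_cfgs L"
  shows "energy J \<eta> - energy J \<eta>' = - (\<Sum>e\<in>nn_edges L. J e * (\<eta> e - \<eta>' e)) + E \<eta> \<eta>'"
proof -
  have "E \<eta>0 \<eta>' = E \<eta>0 \<eta> + E \<eta> \<eta>'"
    using E_cocycle base_cfg assms by blast
  then show ?thesis
    by (simp add: energy_def hamiltonian_def right_diff_distrib sum_subtractf)
qed

lemma prec_iff_energy_less:
  assumes "\<eta> \<in> edge_cfgs L" "\<eta>' \<in> edge_cfgs L"
  shows "prec L E J \<eta> \<eta>' \<longleftrightarrow> energy J \<eta> < energy J \<eta>'"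
proof -
  have "E \<eta>0 \<eta>' = E \<eta>0 \<eta> + E \<eta> \<eta>'"
    using E_cocycle base_cfg assms by blast
  then show ?thesis
    unfolding prec_def energy_def by linarith
qed

lemma energy_inj_on_edge_cfgs:
  assumes "J \<notin> critical_set L E"
  shows "inj_on (energy J) (edge_cfgs L)"
proof (rule inj_onI, rule ccontr)
  fix \<eta> \<eta>' assume \<eta>: "\<eta> \<in> edge_cfgs L" "\<eta>' \<in> edge_cfgs L" "energy J \<eta> = energy J \<eta>'" "\<eta> \<noteq> \<eta>'"
  then have "(\<Sum>e\<in>nn_edges L. J e * (\<eta> e - \<eta>' e)) = E \<eta> \<eta>'"
    using energy_diff[of \<eta> \<eta>' J] by simp
  then show False
    using assms \<eta> unfolding critical_set_def by blast
qed

lemma energy_Min_less: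
  assumes J: "J \<notin> critical_set L E" and A: "A \<subseteq> edge_cfgs L"
    and m: "m \<in> A" "energy J m = Min (energy J ` A)" and \<eta>: "\<eta> \<in> A" "\<eta> \<noteq> m"
  shows "energy J m < energy J \<eta>"
proof -
  have "energy J m \<le> energy J \<eta>"
    using m(2) \<eta>(1) finite_subset[OF A finite_edge_cfgs[OF finite_L]] by simp
  moreover have "energy J \<eta> \<noteq> energy J m"
    using inj_onD[OF energy_inj_on_edge_cfgs[OF J]] \<eta> m(1) A by blast
  ultimately show ?thesis
    by simp
qed

lemma prec_min_eq_energy_argmin:
  assumes J: "J \<notin> critical_set L E" and A: "A \<subseteq> edge_cfgs L" "A \<noteq> {}"
  shows "prec_min L E J A \<in> A" "energy J (prec_min L E J A) = Min (energy J ` A)"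
proof -
  have "Min (energy J ` A) \<in> energy J ` A"
    using A finite_subset[OF A(1) finite_edge_cfgs[OF finite_L]] by (intro Min_in) auto
  then obtain m where m: "m \<in> A" "energy J m = Min (energy J ` A)"
    by auto
  note less = energy_Min_less[OF J A(1) m]
  have in_cfgs: "\<eta> \<in> A \<Longrightarrow> \<eta> \<in> edge_cfgs L" for \<eta>
    using A(1) by blast
  have "prec_min L E J A = m"
    unfolding prec_min_def
  proof (rule the_equality)
    show "m \<in> A \<and> (\<forall>\<eta>'\<in>A. \<eta>' \<noteq> m \<longrightarrow> prec L E J m \<eta>')"
      using m(1) less by (simp add: prec_iff_energy_less in_cfgs)
  next
    fix \<eta> assume \<eta>: "\<eta> \<in> A \<and> (\<forall>\<eta>'\<in>A. \<eta>' \<noteq> \<eta> \<longrightarrow> prec L E J \<eta> \<eta>')"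
    show "\<eta> = m"
    proof (rule ccontr)
      assume "\<eta> \<noteq> m"
      then have "prec L E J \<eta> m"
        using \<eta> m(1) by auto
      then have "energy J \<eta> < energy J m"
        using \<eta> m(1) by (simp add: prec_iff_energy_less in_cfgs)
      moreover have "energy J m < energy J \<eta>"
        using less \<eta> \<open>\<eta> \<noteq> m\<close> by blast
      ultimately show False
        by simp
    qed
  qed
  then show "prec_min L E J A \<in> A" "energy J (prec_min L E J A) = Min (energy J ` A)"
    using m by simp_all
qed

definition cfgs_with :: "real \<Rightarrow> 'd cfg set" where
  "cfgs_with s = {\<eta> \<in> edge_cfgs L. \<eta> b = s}"

lemma cfgs_with_subset: "cfgs_with s \<subseteq> edge_cfgs L"
  by (auto simp: cfgs_with_def)

lemma cfgs_with_nonempty: "s \<in> {-1, 1} \<Longrightarrow> cfgs_with s \<noteq> {}"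
  using edge_cfgs_value_at_edge[OF b_edge] by (auto simp: cfgs_with_def)

lemma finite_cfgs_with: "finite (cfgs_with s)"
  using finite_edge_cfgs[OF finite_L] cfgs_with_subset by (rule finite_subset[rotated])

definition gap :: "'d cfg \<Rightarrow> real" where
  "gap J = Min (energy J ` cfgs_with 1) - Min (energy J ` cfgs_with (-1))"

lemma flex_raw_eq_abs_gap:
  assumes "J \<notin> critical_set L E"
  shows "flex_raw L E b J = \<bar>gap J\<bar>"
proof -
  define \<sigma>p \<sigma>m where "\<sigma>p = prec_min L E J (cfgs_with 1)" and "\<sigma>m = prec_min L E J (cfgs_with (-1))"
  note argmin = prec_min_eq_energy_argmin[OF assms cfgs_with_subset cfgs_with_nonempty]
  have "ground_pm L E s b J = prec_min L E J (cfgs_with s)" for s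
    by (simp add: ground_pm_def cfgs_with_def)
  moreover have "\<sigma>p \<in> edge_cfgs L" "\<sigma>m \<in> edge_cfgs L"
    using argmin(1)[of 1] argmin(1)[of "-1"] cfgs_with_subset unfolding \<sigma>p_def \<sigma>m_def by auto
  ultimately have "flex_raw L E b J = \<bar>energy J \<sigma>p - energy J \<sigma>m\<bar>"
    unfolding flex_raw_def Let_def by (simp add: energy_diff \<sigma>p_def \<sigma>m_def)
  also have "\<dots> = \<bar>gap J\<bar>"
    using argmin(2)[of 1] argmin(2)[of "-1"] by (simp add: gap_def \<sigma>p_def \<sigma>m_def)
  finally show ?thesis .
qed

lemma continuous_on_gap: "continuous_on S gap"
  unfolding gap_def[abs_def] energy_def hamiltonian_def
  using finite_cfgs_with cfgs_with_nonempty
  by (intro continuous_intros continuous_on_Min_image[where f = "\<lambda>\<eta> J. hamiltonian L J \<eta> - E \<eta>0 \<eta>", unfolded hamiltonian_def]) auto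

(* The critical set has empty interior, so a continuous extension of flex_raw is determined by
   its values off the critical set. *)
lemma flex_eq_abs_gap: "flex L E b = (\<lambda>J. \<bar>gap J\<bar>)"
  unfolding flex_def
proof (rule the_equality)
  show "continuous_on UNIV (\<lambda>J. \<bar>gap J\<bar>) \<and>
      (\<forall>J. J \<notin> critical_set L E \<longrightarrow> \<bar>gap J\<bar> = flex_raw L E b J)"
    using flex_raw_eq_abs_gap continuous_on_gap by (simp add: continuous_on_rabs)
next
  fix F assume F: "continuous_on UNIV F \<and> (\<forall>J. J \<notin> critical_set L E \<longrightarrow> F J = flex_raw L E b J)"
  have "closed {J. F J = \<bar>gap J\<bar>}"
    using F continuous_on_gap by (intro closed_Collect_eq continuous_intros) auto
  moreover have "- critical_set L E \<subseteq> {J. F J = \<bar>gap J\<bar>}"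
    using F flex_raw_eq_abs_gap by auto
  ultimately have "closure (- critical_set L E) \<subseteq> {J. F J = \<bar>gap J\<bar>}"
    by (rule closure_minimal[rotated])
  then show "F = (\<lambda>J. \<bar>gap J\<bar>)"
    by (auto simp: closure_complement interior_critical_set_empty[OF finite_L])
qed

lemma ground_at_edge_eq_sign_gap:
  assumes J: "J \<notin> critical_set L E"
  shows "ground L E J b = (if gap J < 0 then 1 else -1)"
proof -
  define \<sigma> where "\<sigma> = ground L E J"
  have "edge_cfgs L \<noteq> {}"
    using base_cfg by auto
  note \<sigma>_min = prec_min_eq_energy_argmin[OF J order_refl this, folded ground_def \<sigma>_def]
  have below: "energy J \<sigma> < Min (energy J ` cfgs_with s)" if ne: "\<sigma> b \<noteq> s" and s: "s \<in> {-1, 1}" for s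
  proof -
    have "Min (energy J ` cfgs_with s) \<in> energy J ` cfgs_with s"
      using finite_cfgs_with cfgs_with_nonempty[OF s] by (intro Min_in) auto
    then obtain \<tau> where \<tau>: "\<tau> \<in> cfgs_with s" "energy J \<tau> = Min (energy J ` cfgs_with s)"
      by auto
    have "\<tau> \<in> edge_cfgs L" "\<tau> \<noteq> \<sigma>"
      using \<tau>(1) ne by (auto simp: cfgs_with_def)
    then show ?thesis
      unfolding \<tau>(2)[symmetric] by (rule energy_Min_less[OF J order_refl \<sigma>_min])
  qed
  have above: "Min (energy J ` cfgs_with (\<sigma> b)) \<le> energy J \<sigma>"
    using \<sigma>_min(1) finite_cfgs_with by (intro Min_le) (auto simp: cfgs_with_def)
  have "\<sigma> b \<in> {-1, 1}"
    using edge_cfgs_on_edges[OF \<sigma>_min(1) b_edge] .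
  then consider "\<sigma> b = 1" | "\<sigma> b = -1"
    by auto
  then show ?thesis
  proof cases
    case 1
    then have "gap J < 0"
      using above below[of "-1"] by (simp add: gap_def)
    then show ?thesis
      using 1 by (simp add: \<sigma>_def)
  next
    case 2
    then have "\<not> gap J < 0"
      using above below[of 1] by (simp add: gap_def)
    then show ?thesis
      using 2 by (simp add: \<sigma>_def)
  qed
qed

lemma ground_at_edge_constant_on_path:
  fixes \<gamma> :: "real \<Rightarrow> 'd cfg"
  assumes \<gamma>: "continuous_on {0..t} \<gamma>" and flex_pos: "\<forall>s\<in>{0..t}. flex L E b (\<gamma> s) > 0"
    and s: "s \<in> {0..t}" and noncrit: "\<gamma> 0 \<notin> critical_set L E" "\<gamma> s \<notin> critical_set L E"
  shows "ground L E (\<gamma> s) b = ground L E (\<gamma> 0) b"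
proof -
  have "continuous_on {0..s} (gap \<circ> \<gamma>)"
    using s by (intro continuous_on_compose continuous_on_gap continuous_on_subset[OF \<gamma>]) auto
  moreover have "(gap \<circ> \<gamma>) u \<noteq> 0" if "u \<in> {0..s}" for u
    using flex_pos that s by (auto simp: flex_eq_abs_gap)
  ultimately have "gap (\<gamma> s) < 0 \<longleftrightarrow> gap (\<gamma> 0) < 0"
    using sign_invariant_if_nonvanishing[of 0 s "gap \<circ> \<gamma>"] s by simp
  then show ?thesis
    using noncrit by (simp add: ground_at_edge_eq_sign_gap)
qed

lemma ground_at_edge_constant_on_curve:
  assumes "J \<notin> critical_set L E" "\<forall>s\<in>{0..t}. flex L E b (curve J J' s) > 0"
    and "s \<in> {0..t}" "curve J J' s \<notin> critical_set L E"
  shows "ground L E (curve J J' s) b = ground L E (curve J J' 0) b"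
  using ground_at_edge_constant_on_path[OF continuous_on_curve assms(2,3)] assms(1,4)
  by (simp add: curve_at_0)

end

theorem proposition2p9:
  fixes a c :: "int ^ 'd::finite"
    and E :: "'d cfg \<Rightarrow> 'd cfg \<Rightarrow> real"
    and b :: "'d edge"
  defines "L \<equiv> box_Z a c"
  assumes E_refl: "\<forall>\<eta>\<in>edge_cfgs L. E \<eta> \<eta> = 0"
    and E_cocycle: "\<forall>\<eta>\<in>edge_cfgs L. \<forall>\<eta>'\<in>edge_cfgs L. \<forall>\<eta>''\<in>edge_cfgs L.
                      E \<eta> \<eta>'' = E \<eta> \<eta>' + E \<eta>' \<eta>''"
    and b_edge: "b \<in> nn_edges L"
  shows "AE JJ in (gauss_couplings L \<Otimes>\<^sub>M gauss_couplings L).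
           \<forall>t\<ge>0. (\<forall>s\<in>{0..t}. flex L E b (curve (fst JJ) (snd JJ) s) > 0) \<longrightarrow>
             (\<forall>s\<in>{0..t}. curve (fst JJ) (snd JJ) s \<notin> critical_set L E \<longrightarrow>
                ground L E (curve (fst JJ) (snd JJ) s) b = ground L E (curve (fst JJ) (snd JJ) 0) b)"
proof -
  have finite_L: "finite L"
    unfolding L_def by (rule finite_box_Z)
  obtain \<eta>0 where "\<eta>0 \<in> edge_cfgs L"
    using edge_cfgs_value_at_edge[OF b_edge] by blast
  then interpret ground_state_model L E b \<eta>0
    using finite_L E_cocycle b_edge by unfold_locales
  interpret sigma_finite_measure "gauss_couplings L"
    unfolding gauss_couplings_def
    by (intro prob_space_imp_sigma_finite prob_space_PiM) (simp add: prob_space_normal_density)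
  have "(critical_set L E \<inter> space (gauss_couplings L)) \<times> space (gauss_couplings L)
      \<in> null_sets (gauss_couplings L \<Otimes>\<^sub>M gauss_couplings L)"
    using critical_set_null[OF finite_L] by (rule times_in_null_sets1) simp
  then have "AE JJ in gauss_couplings L \<Otimes>\<^sub>M gauss_couplings L. fst JJ \<notin> critical_set L E"
    by (rule AE_I') (auto simp: space_pair_measure)
  then show ?thesis
    by (rule eventually_mono) (auto intro: ground_at_edge_constant_on_curve)
qed

end
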